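(* Let $m$ and $n$ be non-negative integers with $m+n\ge1$. Then the rational number $$\binom{m+n}{m}\binom{n+1}{m}\binom{2n}{n}\frac{3m^2+n^2+m+n}{(m+n)(n+1)}$$ is an integer divisible by $m+n+1$.
   Context: Binomial coefficients $\binom{a}{b}$ with $b>a\ge 0$ are zero. *)

theory Defs
  imports Complex_Main
begin

end

theory Submission
  imports Defs
begin

text \<open>For m \<ge> 1 put B = C(m+n-1, m-1) and D = C(2n, n-m+1). Every binomial coefficient in
  the expression, and also C(m+n-1, m), C(2n, n-m) and C(2n, n-m-1), is a rational-function
  multiple of B or D by the ratios of adjacent binomial coefficients, together with
  C(n+1, m) C(2n, n) = (n+1) B D / m. So the expression equals
  B^2 D (3m^2 + n^2 + m + n) / m^2, which turns out to be m + n + 1 times an explicit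
  integral quadratic form in C(m+n-1, m), B and C(2n, n-m+j), j = -1, 0, 1.
  For m = 0 that form is C(2n, n) - C(2n, n+1), whose (n+1)-fold is C(2n, n).\<close>

lemma of_nat_Suc_times_binomial:
  "of_nat (Suc k) * of_nat (n choose Suc k) = (of_nat n - of_nat k) * (of_nat (n choose k) :: 'a::ring_1)"
proof (cases "k \<le> n")
  case True
  have "Suc k * (n choose Suc k) = (n - k) * (n choose k)"
    using binomial_absorption[of k n] binomial_absorb_comp[of n k] by simp
  then show ?thesis
    using True by (metis of_nat_diff of_nat_mult)
next
  case False
  then show ?thesis by (simp add: binomial_eq_0)
qed

lemma binomial_add_commute: "(a + b) choose a = (a + b) choose b"
  using binomial_symmetric[of a "a + b"] by simp

lemma Suc_times_binomial_times_central_binomial: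
  "Suc j * ((n + 1) choose Suc j) * ((2 * n) choose n)
    = (n + 1) * ((n + j) choose n) * ((2 * n) choose (n + j))"
proof (cases "j \<le> n")
  case False
  then show ?thesis by (simp add: binomial_eq_0)
next
  case True
  then obtain q where n: "n = j + q" using le_Suc_ex by blast
  have "Suc j * ((n + 1) choose Suc j) = (n + 1) * (n choose j)"
    using Suc_times_binomial[of j n] by simp
  moreover have "(n choose j) * ((2 * n) choose n) = ((n + j) choose n) * ((2 * n) choose (n + j))"
  proof -
    have N: "2 * n = j + n + q" and N': "q + (n + j) = 2 * n" using n by simp_all
    have "(n choose j) * ((2 * n) choose n) = ((2 * n) choose n) * (n choose q)"
      using binomial_add_commute[of j q] n by simp
    also have "\<dots> = ((2 * n) choose q) * ((n + j) choose j)"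
      using choose_mult_lemma[of j n q, unfolded n[symmetric] N[symmetric]] by (simp add: ac_simps)
    also have "\<dots> = ((2 * n) choose (n + j)) * ((n + j) choose n)"
      using binomial_add_commute[of q "n + j", unfolded N'] binomial_add_commute[of n j]
      by (simp only: mult.commute)
    finally show ?thesis by simp
  qed
  ultimately show ?thesis by (metis mult.assoc)
qed

lemma cofactor_identity:
  fixes m n A B C E D0 D1 D2 :: "'a::field"
  assumes nz: "m \<noteq> 0" "m + n \<noteq> 0" "n + 1 \<noteq> 0"
    and A: "m * A = n * B" and C: "m * C = (m + n) * B" and E: "m * E = (n + 1) * B * D2"
    and D1: "(m + n) * D1 = (n - m + 1) * D2" and D0: "(m + n + 1) * D0 = (n - m) * D1"
  shows "C * E * ((3 * m^2 + n^2 + m + n) / ((m + n) * (n + 1)))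
    = (m + n + 1) * (A^2 * (D1 - D0) + 2 * A * B * (D1 - D0 - D2) + B^2 * (2 * D2 + D1 - D0))"
proof -
  have "(m + n) * (m + n + 1) * (D1 - D0) = (2 * m + 1) * (n - m + 1) * D2"
    using D0 D1 by algebra
  then have "(m + n) * ((m + n + 1) * (n^2 * (D1 - D0) + 2 * n * m * (D1 - D0 - D2) + m^2 * (2 * D2 + D1 - D0)))
      = (m + n) * ((3 * m^2 + n^2 + m + n) * D2)"
    by algebra
  then have bracket: "(m + n + 1) * (n^2 * (D1 - D0) + 2 * n * m * (D1 - D0 - D2) + m^2 * (2 * D2 + D1 - D0))
      = (3 * m^2 + n^2 + m + n) * D2"
    using nz(2) by simp
  have "m^2 * (C * E * ((3 * m^2 + n^2 + m + n) / ((m + n) * (n + 1))))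
      = m^2 * (C * E) * (3 * m^2 + n^2 + m + n) / ((m + n) * (n + 1))"
    by simp
  also have "m^2 * (C * E) = (m + n) * (n + 1) * (B^2 * D2)"
    using C E by (simp add: power2_eq_square) algebra
  also have "(m + n) * (n + 1) * (B^2 * D2) * (3 * m^2 + n^2 + m + n) / ((m + n) * (n + 1))
      = B^2 * ((3 * m^2 + n^2 + m + n) * D2)"
    using nz by simp
  also have "\<dots> = m^2 * ((m + n + 1) * (A^2 * (D1 - D0) + 2 * A * B * (D1 - D0 - D2) + B^2 * (2 * D2 + D1 - D0)))"
    unfolding bracket[symmetric] using A by algebra
  finally have "m^2 = 0 \<or> ?thesis"
    by (simp only: mult_cancel_left)
  then show ?thesis
    using nz by simp
qed

definition binomial_fraction :: "nat \<Rightarrow> nat \<Rightarrow> rat" where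
  "binomial_fraction m n =
    of_nat ((m + n) choose m) * of_nat ((n + 1) choose m) * of_nat ((2 * n) choose n)
      * (of_nat (3 * m^2 + n^2 + m + n) / (of_nat (m + n) * of_nat (n + 1)))"

text \<open>The lower indices n+m+1, n+m, n+m-1 mirror n-m-1, n-m, n-m+1, so the coefficients vanish
  exactly when the latter indices are negative. For m = 0 the truncated subtraction gives
  B = C(n-1, n) = 0, as required.\<close>
definition cofactor :: "nat \<Rightarrow> nat \<Rightarrow> int" where
  "cofactor m n =
    (let A = int ((m + n - 1) choose m); B = int ((m + n - 1) choose n);
         D\<^sub>0 = int ((2 * n) choose (n + m + 1)); D\<^sub>1 = int ((2 * n) choose (n + m));
         D\<^sub>2 = int ((2 * n) choose (n + m - 1))
     in A^2 * (D\<^sub>1 - D\<^sub>0) + 2 * A * B * (D\<^sub>1 - D\<^sub>0 - D\<^sub>2) + B^2 * (2 * D\<^sub>2 + D\<^sub>1 - D\<^sub>0))"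

lemma binomial_fraction_Suc:
  "binomial_fraction (Suc j) n = of_int (int (Suc j + n + 1) * cofactor (Suc j) n)"
proof -
  let ?m = "of_nat (Suc j) :: rat" and ?n = "of_nat n :: rat"
  let ?B = "of_nat ((n + j) choose n) :: rat"
  let ?D\<^sub>2 = "of_nat ((2 * n) choose (n + j)) :: rat"
  let ?D\<^sub>1 = "of_nat ((2 * n) choose Suc (n + j)) :: rat"
  have nz: "?m \<noteq> 0" "?m + ?n \<noteq> 0" "?n + 1 \<noteq> 0"
    by (simp_all add: add_nonneg_eq_0_iff)
  have "Suc j * ((n + j) choose Suc j) = n * ((n + j) choose n)"
  proof (cases n)
    case (Suc b)
    then show ?thesis
      using Suc_times_binomial_add[of j b] binomial_add_commute[of j n] by (simp add: add.commute)
  qed simp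
  then have A: "?m * of_nat ((n + j) choose Suc j) = ?n * ?B"
    by (metis of_nat_mult)
  have "Suc j * ((Suc j + n) choose Suc j) = (Suc j + n) * ((n + j) choose n)"
    using Suc_times_binomial[of j "j + n"] binomial_add_commute[of j n] by (simp add: add.commute)
  then have C: "?m * of_nat ((Suc j + n) choose Suc j) = (?m + ?n) * ?B"
    by (metis of_nat_add of_nat_mult)
  have E: "?m * (of_nat ((n + 1) choose Suc j) * of_nat ((2 * n) choose n)) = (?n + 1) * ?B * ?D\<^sub>2"
    using arg_cong[OF Suc_times_binomial_times_central_binomial[of j n], of "of_nat :: nat \<Rightarrow> rat"]
    by (simp only: of_nat_mult of_nat_add of_nat_1 mult.assoc)
  have D\<^sub>1: "(?m + ?n) * ?D\<^sub>1 = (?n - ?m + 1) * ?D\<^sub>2"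
    using of_nat_Suc_times_binomial[of "n + j" "2 * n", where 'a = rat] by (simp add: algebra_simps)
  have D\<^sub>0: "(?m + ?n + 1) * of_nat ((2 * n) choose Suc (Suc (n + j))) = (?n - ?m) * ?D\<^sub>1"
    using of_nat_Suc_times_binomial[of "Suc (n + j)" "2 * n", where 'a = rat] by (simp add: algebra_simps)
  show ?thesis
    using cofactor_identity[OF nz A C E D\<^sub>1 D\<^sub>0]
    unfolding binomial_fraction_def cofactor_def Let_def
    by (simp add: algebra_simps)
qed

lemma binomial_fraction_0:
  assumes "n \<noteq> 0"
  shows "binomial_fraction 0 n = of_int (int (0 + n + 1) * cofactor 0 n)"
proof -
  have cofactor: "cofactor 0 n = int ((2 * n) choose n) - int ((2 * n) choose Suc n)"
    using assms unfolding cofactor_def Let_def by (simp add: binomial_eq_0)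
  have fraction: "binomial_fraction 0 n = of_nat ((2 * n) choose n)"
  proof -
    have "of_nat (3 * 0^2 + n^2 + 0 + n) = (of_nat (0 + n) * of_nat (n + 1) :: rat)"
      by (simp add: power2_eq_square algebra_simps)
    moreover have "(of_nat (0 + n) * of_nat (n + 1) :: rat) \<noteq> 0"
      using assms by simp
    ultimately show ?thesis
      unfolding binomial_fraction_def by simp
  qed
  have "(of_nat n + 1) * of_nat ((2 * n) choose Suc n) = of_nat n * (of_nat ((2 * n) choose n) :: rat)"
    using of_nat_Suc_times_binomial[of n "2 * n", where 'a = rat] by (simp add: add.commute)
  then show ?thesis
    unfolding cofactor fraction by (simp add: algebra_simps)
qed

lemma binomial_fraction_eq_cofactor:
  assumes "m + n \<ge> 1"
  shows "binomial_fraction m n = of_int (int (m + n + 1) * cofactor m n)"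
  using assms binomial_fraction_0[of n] binomial_fraction_Suc by (cases m) auto

theorem lemma3:
  fixes m n :: nat
  assumes "m + n \<ge> 1"
  shows "\<exists>k :: int.
    (of_nat ((m + n) choose m) * of_nat ((n + 1) choose m) * of_nat ((2 * n) choose n)
       * (of_nat (3 * m^2 + n^2 + m + n) / (of_nat (m + n) * of_nat (n + 1))) :: rat)
    = of_int (int (m + n + 1) * k)"
  using binomial_fraction_eq_cofactor[OF assms] unfolding binomial_fraction_def by blast

end
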